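(* Let $V=\mathbb{C}^n$ be the defining representation of $GL_n(\mathbb{C})$ restricted to $T\rtimes S_n$, and $k_1,\dots,k_m\ge 0$. Then, as representations of $T\rtimes S_n$, $$\mathrm{Sym}^{k_1}(V)\otimes\dots\otimes\mathrm{Sym}^{k_m}(V)\cong\bigoplus_{P}\tilde{M}(\mathrm{Type}(P)),$$ the sum over all multiset partitions $P$ of the multiset $\{1^{k_1},2^{k_2},\dots,m^{k_m}\}$ with $|P|\le n$ parts.
   Context: Let $T\subset GL_n(\mathbb{C})$ be the diagonal torus, $S_n$ the permutation matrices, $T\rtimes S_n\cong\mathbb{C}^\times\wr S_n$ the monomial matrices. For a partition $\lambda$ of $r$ and integer $k$, $S^{\lambda,k}$ is the representation of $\mathbb{C}^\times\wr S_r$ on the Specht module $S^\lambda$ with each copy of $\mathbb{C}^\times$ acting by $z\mapsto z^k$. For a composition $\nu=(\nu_1,\dots,\nu_\ell)$ of $n$ and integers $\mathbf{w}$, $M(\nu,\mathbf{w}):=\mathrm{Ind}_{(\mathbb{C}^\times\wr S_{\nu_1})\times\dots\times(\mathbb{C}^\times\wr S_{\nu_\ell})}^{\mathbb{C}^\times\wr S_n}(S^{(\nu_1),w_1}\otimes\dots\otimes S^{(\nu_\ell),w_\ell})$ (block-diagonal subgroup). For partitions $\lambda^1,\dots,\lambda^j$, $\lambda^i=(\lambda^i_1,\dots,\lambda^i_{\ell_i})$, of total size $m'\le n$, $\tilde{M}(\lambda^1,\dots,\lambda^j):=M((n-m',\lambda^1_1,\dots,\lambda^1_{\ell_1},\dots,\lambda^j_1,\dots,\lambda^j_{\ell_j}),(0,1,\dots,1,\dots,j,\dots,j))$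 with $\ell_i$ entries equal to $i$ (the part $n-m'$ omitted if zero). A multiset partition of a multiset $M$ is a multiset of nonempty sub-multisets (parts) of $M$ whose multiplicities add up to those of $M$; $|P|$ is the number of parts. $\{1^{k_1},\dots,m^{k_m}\}$ is the multiset containing $i$ with multiplicity $k_i$. The type of $P$ is the sequence of partitions $\mathrm{Type}(P)=(\lambda^1,\lambda^2,\dots)$ where $\lambda^i$ is the partition whose parts are the multiplicities with which the distinct parts of size $i$ occur in $P$ (e.g. $P=\{\{1\},\{1\},\{2\}\}$ has $\lambda^1=(2,1)$ and all other $\lambda^i=\emptyset$). *)

theory Defs
  imports Complex_Main "HOL-Library.Multiset" "HOL-Combinatorics.Permutations"
begin

type_synonym cmat = "nat \<Rightarrow> nat \<Rightarrow> complex"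

text \<open>n x n complex matrices are functions nat => nat => complex that vanish outside
  the index range {0..<n}. Monomial matrices = T \<rtimes> S_n (exactly one nonzero
  entry in every row and every column).\<close>

definition monomial_mat :: "nat \<Rightarrow> cmat \<Rightarrow> bool" where
  "monomial_mat n g \<longleftrightarrow>
     (\<forall>i j. (n \<le> i \<or> n \<le> j) \<longrightarrow> g i j = 0) \<and>
     (\<forall>i<n. \<exists>!j. j < n \<and> g i j \<noteq> 0) \<and>
     (\<forall>j<n. \<exists>!i. i < n \<and> g i j \<noteq> 0)"

definition mmul :: "nat \<Rightarrow> cmat \<Rightarrow> cmat \<Rightarrow> cmat" where
  "mmul n g h = (\<lambda>i j. if i < n \<and> j < n then (\<Sum>k<n. g i k * h k j) else 0)"

text \<open>A representation is given by a subspace S of a function space 'a => complex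
  together with an action act g.\<close>

definition rep_iso ::
  "nat \<Rightarrow> ('a \<Rightarrow> complex) set \<times> (cmat \<Rightarrow> ('a \<Rightarrow> complex) \<Rightarrow> ('a \<Rightarrow> complex))
       \<Rightarrow> ('b \<Rightarrow> complex) set \<times> (cmat \<Rightarrow> ('b \<Rightarrow> complex) \<Rightarrow> ('b \<Rightarrow> complex)) \<Rightarrow> bool" where
  "rep_iso n R1 R2 \<longleftrightarrow>
     (\<exists>f. (\<forall>u\<in>fst R1. \<forall>v\<in>fst R1. f (\<lambda>x. u x + v x) = (\<lambda>y. f u y + f v y)) \<and>
          (\<forall>c. \<forall>u\<in>fst R1. f (\<lambda>x. c * u x) = (\<lambda>y. c * f u y)) \<and>
          bij_betw f (fst R1) (fst R2) \<and>
          (\<forall>g. monomial_mat n g \<longrightarrow> (\<forall>v\<in>fst R1. f (snd R1 g v) = snd R2 g (f v))))"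

definition dsum_space :: "'i set \<Rightarrow> ('i \<Rightarrow> ('a \<Rightarrow> complex) set) \<Rightarrow> ('i \<times> 'a \<Rightarrow> complex) set" where
  "dsum_space I S = {F. \<forall>i. (i \<notin> I \<longrightarrow> (\<lambda>x. F (i, x)) = (\<lambda>x. 0)) \<and>
                            (i \<in> I \<longrightarrow> (\<lambda>x. F (i, x)) \<in> S i)}"

definition dsum_act ::
  "('i \<Rightarrow> cmat \<Rightarrow> ('a \<Rightarrow> complex) \<Rightarrow> ('a \<Rightarrow> complex)) \<Rightarrow> cmat \<Rightarrow> ('i \<times> 'a \<Rightarrow> complex) \<Rightarrow> ('i \<times> 'a \<Rightarrow> complex)" where
  "dsum_act A g F = (\<lambda>(i, x). A i g (\<lambda>y. F (i, y)) x)"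

text \<open>V^{\<otimes>K}: tensors are coefficient functions on index lists of length K with
  entries < n.
  Sym^{k_1}(V) \<otimes> ... \<otimes> Sym^{k_m}(V) is realised (char 0) as the subspace of
  V^{\<otimes>(k_1+...+k_m)} of tensors symmetric within each block of k_j consecutive
  tensor positions.\<close>

definition tidx :: "nat \<Rightarrow> nat \<Rightarrow> nat list set" where
  "tidx n K = {is. length is = K \<and> set is \<subseteq> {..<n}}"

definition offs :: "nat list \<Rightarrow> nat \<Rightarrow> nat" where
  "offs ks j = sum_list (take j ks)"

definition block_perm :: "nat list \<Rightarrow> (nat \<Rightarrow> nat) \<Rightarrow> bool" where
  "block_perm ks p \<longleftrightarrow> p permutes {..<sum_list ks} \<and>
     (\<forall>j<length ks. p ` {offs ks j..<offs ks (Suc j)} = {offs ks j..<offs ks (Suc j)})"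

definition symtens_space :: "nat \<Rightarrow> nat list \<Rightarrow> (nat list \<Rightarrow> complex) set" where
  "symtens_space n ks =
     {T. (\<forall>is. is \<notin> tidx n (sum_list ks) \<longrightarrow> T is = 0) \<and>
         (\<forall>p. block_perm ks p \<longrightarrow>
            (\<forall>is\<in>tidx n (sum_list ks). T (map (\<lambda>a. is ! p a) [0..<sum_list ks]) = T is))}"

definition tens_act :: "nat \<Rightarrow> nat \<Rightarrow> cmat \<Rightarrow> (nat list \<Rightarrow> complex) \<Rightarrow> (nat list \<Rightarrow> complex)" where
  "tens_act n K g T = (\<lambda>is. if is \<in> tidx n K then
       (\<Sum>js\<in>tidx n K. (\<Prod>a<K. g (is ! a) (js ! a)) * T js) else 0)"

text \<open>A composition with weights is a list of pairs (\<nu>_k, w_k). Block k is the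
  index interval of length \<nu>_k starting at \<nu>_1 + ... + \<nu>_{k-1}.\<close>

definition cblock :: "(nat \<times> int) list \<Rightarrow> nat \<Rightarrow> nat set" where
  "cblock cs k = {sum_list (map fst (take k cs)) ..< sum_list (map fst (take (Suc k) cs))}"

text \<open>The block-diagonal subgroup (C^\<times> \<wr> S_{\<nu>_1}) \<times> ... \<times> (C^\<times> \<wr> S_{\<nu>_l}).\<close>

definition blockdiag :: "nat \<Rightarrow> (nat \<times> int) list \<Rightarrow> cmat \<Rightarrow> bool" where
  "blockdiag n cs h \<longleftrightarrow> monomial_mat n h \<and>
     (\<forall>i j. h i j \<noteq> 0 \<longrightarrow> (\<exists>k<length cs. i \<in> cblock cs k \<and> j \<in> cblock cs k))"

text \<open>The character S^{(\<nu>_1),w_1} \<otimes> ... \<otimes> S^{(\<nu>_l),w_l}: the Specht module S^{(r)}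
  of a one-row partition is the trivial one-dimensional representation of S_r,
  and each copy of C^\<times> (a nonzero entry of the monomial block) acts by z \<mapsto> z^w.\<close>

definition block_char :: "(nat \<times> int) list \<Rightarrow> cmat \<Rightarrow> complex" where
  "block_char cs h = (\<Prod>k<length cs.
      (\<Prod>i\<in>cblock cs k. \<Prod>j\<in>cblock cs k. if h i j = 0 then 1 else h i j) powi (snd (cs ! k)))"

text \<open>Ind_H^G \<chi> = {f : G \<rightarrow> C | f(h x) = \<chi>(h) f(x) for h \<in> H}, with (g f)(x) = f(x g).\<close>

definition ind_space :: "nat \<Rightarrow> (nat \<times> int) list \<Rightarrow> (cmat \<Rightarrow> complex) set" where
  "ind_space n cs = {f. (\<forall>x. \<not> monomial_mat n x \<longrightarrow> f x = 0) \<and>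
      (\<forall>h x. blockdiag n cs h \<and> monomial_mat n x \<longrightarrow> f (mmul n h x) = block_char cs h * f x)}"

definition ind_act :: "nat \<Rightarrow> cmat \<Rightarrow> (cmat \<Rightarrow> complex) \<Rightarrow> (cmat \<Rightarrow> complex)" where
  "ind_act n g f = (\<lambda>x. if monomial_mat n x then f (mmul n x g) else 0)"

text \<open>Partitions are represented as multisets of positive naturals (their parts).
  The composition of M-tilde(\<lambda>^1,...,\<lambda>^j): (n-m', parts of \<lambda>^1, ..., parts of \<lambda>^j)
  with weights (0, 1,...,1, ..., j,...,j); the part n-m' is omitted if zero;
  parts of each \<lambda>^i are listed in weakly decreasing order.\<close>

definition Mtilde_comp :: "nat \<Rightarrow> nat multiset list \<Rightarrow> (nat \<times> int) list" where
  "Mtilde_comp n lams =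
     (let m' = sum_list (map sum_mset lams) in
      (if n - m' = 0 then [] else [(n - m', 0)]) @
      concat (map (\<lambda>i. map (\<lambda>r. (r, int (Suc i))) (rev (sorted_list_of_multiset (lams ! i))))
                  [0..<length lams]))"

definition Mtilde_space :: "nat \<Rightarrow> nat multiset list \<Rightarrow> (cmat \<Rightarrow> complex) set" where
  "Mtilde_space n lams = ind_space n (Mtilde_comp n lams)"

definition multiset_partitions :: "'a multiset \<Rightarrow> 'a multiset multiset set" where
  "multiset_partitions M = {P. sum_mset P = M \<and> {#} \<notin># P}"

definition type_part :: "'a multiset multiset \<Rightarrow> nat \<Rightarrow> nat multiset" where
  "type_part P i = image_mset (count P) (mset_set {A \<in> set_mset P. size A = i})"

definition mtype :: "'a multiset multiset \<Rightarrow> nat multiset list" where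
  "mtype P = map (type_part P) [1..<Suc (Max (insert 0 (size ` set_mset P)))]"

definition target_mset :: "nat list \<Rightarrow> nat multiset" where
  "target_mset ks = (\<Sum>i<length ks. replicate_mset (ks ! i) (Suc i))"

end

(* The monomial matrices permute the basis tensors of V^(k_1+...+k_m) up to scalars, so
   Sym^k_1(V) (x) ... (x) Sym^k_m(V) splits into monomial representations, one for each orbit
   of symmetrised basis tensors. Such a tensor is described by labelling every coordinate
   i < n with the multiset of tensor factors in which e_i occurs; up to permuting the
   coordinates, the nonempty labels form a multiset partition P of {1^k_1, ..., m^k_m} with at
   most n parts, and this is a complete invariant of the orbit. Listing equal labels on
   consecutive coordinates, the stabiliser of the standard tensor of type P is the
   block-diagonal subgroup of M~(Type P), acting on it by the character
   x |-> prod_i x_i^|label i|. Hence T |-> ((P, x) |-> (x T)(standard index of P)) is an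
   isomorphism onto the direct sum of the induced representations M~(Type P). *)

theory Submission
  imports Defs
begin

section \<open>Monomial matrices and their action on tensors\<close>

definition mono_perm :: "nat \<Rightarrow> cmat \<Rightarrow> nat \<Rightarrow> nat" where
  "mono_perm n g i = (if i < n then (THE j. j < n \<and> g i j \<noteq> 0) else i)"

definition mono_coeff :: "nat \<Rightarrow> cmat \<Rightarrow> nat \<Rightarrow> complex" where
  "mono_coeff n g i = g i (mono_perm n g i)"

definition mono_of :: "nat \<Rightarrow> (nat \<Rightarrow> nat) \<Rightarrow> (nat \<Rightarrow> complex) \<Rightarrow> cmat" where
  "mono_of n s v = (\<lambda>i j. if i < n \<and> j = s i then v i else 0)"

abbreviation perm_mat :: "nat \<Rightarrow> (nat \<Rightarrow> nat) \<Rightarrow> cmat" where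
  "perm_mat n s \<equiv> mono_of n s (\<lambda>_. 1)"

lemma mono_perm_spec:
  assumes "monomial_mat n g" "i < n"
  shows "mono_perm n g i < n" "g i (mono_perm n g i) \<noteq> 0"
proof -
  from assms have "\<exists>!j. j < n \<and> g i j \<noteq> 0" unfolding monomial_mat_def by blast
  then have "(THE j. j < n \<and> g i j \<noteq> 0) < n \<and> g i (THE j. j < n \<and> g i j \<noteq> 0) \<noteq> 0"
    by (rule theI')
  then show "mono_perm n g i < n" "g i (mono_perm n g i) \<noteq> 0"
    using assms(2) by (simp_all add: mono_perm_def)
qed

lemma monomial_mat_nonzero_iff:
  assumes "monomial_mat n g"
  shows "g i j \<noteq> 0 \<longleftrightarrow> i < n \<and> j = mono_perm n g i"
proof
  assume h: "g i j \<noteq> 0"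
  then have ij: "i < n" "j < n" using assms unfolding monomial_mat_def by (meson not_le)+
  from assms ij have "\<exists>!j. j < n \<and> g i j \<noteq> 0" unfolding monomial_mat_def by blast
  then show "i < n \<and> j = mono_perm n g i" using mono_perm_spec[OF assms ij(1)] h ij by blast
next
  assume "i < n \<and> j = mono_perm n g i"
  then show "g i j \<noteq> 0" using mono_perm_spec[OF assms] by blast
qed

lemma mono_perm_permutes:
  assumes "monomial_mat n g"
  shows "mono_perm n g permutes {..<n}"
proof (rule bij_imp_permutes)
  have "inj_on (mono_perm n g) {..<n}"
  proof (rule inj_onI)
    fix i i' assume "i \<in> {..<n}" "i' \<in> {..<n}" "mono_perm n g i = mono_perm n g i'"
    moreover have "\<exists>!k. k < n \<and> g k (mono_perm n g i) \<noteq> 0"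
      using assms mono_perm_spec[OF assms] \<open>i \<in> {..<n}\<close> unfolding monomial_mat_def by auto
    ultimately show "i = i'" using mono_perm_spec[OF assms] by (metis lessThan_iff)
  qed
  moreover have "mono_perm n g ` {..<n} \<subseteq> {..<n}" using mono_perm_spec[OF assms] by auto
  ultimately show "bij_betw (mono_perm n g) {..<n} {..<n}"
    by (simp add: bij_betw_def endo_inj_surj)
qed (simp add: mono_perm_def)

lemma mono_coeff_nonzero: "monomial_mat n g \<Longrightarrow> i < n \<Longrightarrow> mono_coeff n g i \<noteq> 0"
  using mono_perm_spec by (simp add: mono_coeff_def)

lemma mono_of_perm_coeff:
  assumes "monomial_mat n g"
  shows "mono_of n (mono_perm n g) (mono_coeff n g) = g"
  using monomial_mat_nonzero_iff[OF assms] by (fastforce simp: mono_of_def mono_coeff_def)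

lemma mono_of_cong:
  assumes "\<And>i. i < n \<Longrightarrow> s i = s' i" "\<And>i. i < n \<Longrightarrow> v i = v' i"
  shows "mono_of n s v = mono_of n s' v'"
  using assms by (auto simp: mono_of_def fun_eq_iff)

lemma
  assumes "s permutes {..<n}" "\<And>i. i < n \<Longrightarrow> v i \<noteq> 0"
  shows monomial_mat_mono_of: "monomial_mat n (mono_of n s v)"
    and mono_perm_mono_of: "mono_perm n (mono_of n s v) = s"
    and mono_coeff_mono_of: "i < n \<Longrightarrow> mono_coeff n (mono_of n s v) i = v i"
proof -
  have s_less: "\<And>i. i < n \<Longrightarrow> s i < n" using permutes_in_image[OF assms(1)] by auto
  have s_inv: "\<And>j. j < n \<Longrightarrow> inv s j < n \<and> s (inv s j) = j"
    using assms(1) by (metis lessThan_iff permutes_inverses(1) permutes_in_image permutes_inv)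
  have s_inj: "\<And>i i'. s i = s i' \<Longrightarrow> i = i'" using assms(1) by (metis permutes_inverses(2))
  show mono: "monomial_mat n (mono_of n s v)"
    unfolding monomial_mat_def mono_of_def
  proof (intro conjI allI impI)
    fix i j assume "n \<le> i \<or> n \<le> j" then show "(if i < n \<and> j = s i then v i else 0) = 0"
      using s_less by (auto simp: not_less[symmetric])
  next
    fix i assume "i < n" then show "\<exists>!j. j < n \<and> (if i < n \<and> j = s i then v i else 0) \<noteq> 0"
      using s_less assms(2) by (intro ex1I[of _ "s i"]) (auto split: if_splits)
  next
    fix j assume "j < n" then show "\<exists>!i. i < n \<and> (if i < n \<and> j = s i then v i else 0) \<noteq> 0"
      using s_inv s_inj assms(2) by (intro ex1I[of _ "inv s j"]) (auto split: if_splits)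
  qed
  show perm: "mono_perm n (mono_of n s v) = s"
  proof
    fix i show "mono_perm n (mono_of n s v) i = s i"
      using mono_perm_spec[OF mono, of i] assms(1)
      by (cases "i < n") (auto simp: mono_of_def mono_perm_def permutes_not_in split: if_splits)
  qed
  show "i < n \<Longrightarrow> mono_coeff n (mono_of n s v) i = v i"
    unfolding mono_coeff_def perm by (simp add: mono_of_def)
qed

lemma mmul_mono_of:
  assumes "s permutes {..<n}" "t permutes {..<n}"
  shows "mmul n (mono_of n s v) (mono_of n t u) = mono_of n (t \<circ> s) (\<lambda>i. v i * u (s i))"
proof (intro ext)
  fix i j
  have s_less: "s i < n" "t i < n" if "i < n" for i
    using permutes_in_image[OF assms(1)] permutes_in_image[OF assms(2)] that by auto
  show "mmul n (mono_of n s v) (mono_of n t u) i j = mono_of n (t \<circ> s) (\<lambda>i. v i * u (s i)) i j"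
  proof (cases "i < n \<and> j < n")
    case True
    then have "(\<Sum>k<n. mono_of n s v i k * mono_of n t u k j)
        = (\<Sum>k<n. if k = s i then v i * mono_of n t u k j else 0)"
      by (intro sum.cong) (auto simp: mono_of_def)
    also have "\<dots> = v i * mono_of n t u (s i) j" using s_less True by simp
    finally show ?thesis using True s_less by (auto simp: mmul_def mono_of_def)
  qed (use s_less in \<open>auto simp: mmul_def mono_of_def\<close>)
qed

lemma
  assumes "monomial_mat n x" "monomial_mat n g"
  shows monomial_mat_mmul: "monomial_mat n (mmul n x g)"
    and mono_perm_mmul: "mono_perm n (mmul n x g) = mono_perm n g \<circ> mono_perm n x"
    and mono_coeff_mmul:
      "i < n \<Longrightarrow> mono_coeff n (mmul n x g) i = mono_coeff n x i * mono_coeff n g (mono_perm n x i)"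
proof -
  have perms: "mono_perm n x permutes {..<n}" "mono_perm n g permutes {..<n}"
    using assms by (simp_all add: mono_perm_permutes)
  have prod: "mmul n x g = mono_of n (mono_perm n g \<circ> mono_perm n x)
      (\<lambda>i. mono_coeff n x i * mono_coeff n g (mono_perm n x i))"
    using mmul_mono_of[OF perms, of "mono_coeff n x" "mono_coeff n g"]
    by (simp add: mono_of_perm_coeff assms)
  have "mono_perm n g \<circ> mono_perm n x permutes {..<n}"
    using perms by (simp add: permutes_compose)
  moreover have "\<And>i. i < n \<Longrightarrow> mono_coeff n x i * mono_coeff n g (mono_perm n x i) \<noteq> 0"
    using mono_coeff_nonzero assms mono_perm_spec by auto
  ultimately show "monomial_mat n (mmul n x g)" "mono_perm n (mmul n x g) = mono_perm n g \<circ> mono_perm n x"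
    "i < n \<Longrightarrow> mono_coeff n (mmul n x g) i = mono_coeff n x i * mono_coeff n g (mono_perm n x i)"
    unfolding prod by (simp_all add: monomial_mat_mono_of mono_perm_mono_of mono_coeff_mono_of)
qed

lemma monomial_mat_perm_mat: "s permutes {..<n} \<Longrightarrow> monomial_mat n (perm_mat n s)"
  and mono_perm_perm_mat: "s permutes {..<n} \<Longrightarrow> mono_perm n (perm_mat n s) = s"
  and mono_coeff_perm_mat: "s permutes {..<n} \<Longrightarrow> i < n \<Longrightarrow> mono_coeff n (perm_mat n s) i = 1"
  by (simp_all add: monomial_mat_mono_of mono_perm_mono_of mono_coeff_mono_of)

lemma map_permutes_in_tidx:
  assumes "js \<in> tidx n K" "s permutes {..<n}"
  shows "map s js \<in> tidx n K"
  using assms permutes_in_image[OF assms(2)] by (auto simp: tidx_def)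

lemma finite_tidx: "finite (tidx n K)"
proof -
  have "tidx n K \<subseteq> {xs. set xs \<subseteq> {..<n} \<and> length xs = K}" by (auto simp: tidx_def)
  then show ?thesis using finite_lists_length_eq[of "{..<n}" K] finite_subset by blast
qed

lemma tens_act_monomial:
  assumes g: "monomial_mat n g" and js: "js \<in> tidx n K"
  shows "tens_act n K g T js = (\<Prod>a<K. mono_coeff n g (js ! a)) * T (map (mono_perm n g) js)"
proof -
  have len_js: "length js = K" using js by (simp add: tidx_def)
  let ?ls = "map (mono_perm n g) js"
  have vanish: "(\<Prod>a<K. g (js ! a) (ls ! a)) = 0" if ls: "ls \<in> tidx n K" and ne: "ls \<noteq> ?ls" for ls
  proof -
    have "length ls = K" using ls by (simp add: tidx_def)
    then obtain a where "a < K" "ls ! a \<noteq> ?ls ! a"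
      using ne len_js by (metis length_map nth_equalityI)
    then show ?thesis using monomial_mat_nonzero_iff[OF g] len_js by (intro prod_zero) auto
  qed
  have "(\<Sum>ls\<in>tidx n K. (\<Prod>a<K. g (js ! a) (ls ! a)) * T ls)
      = (\<Sum>ls\<in>tidx n K. if ls = ?ls then (\<Prod>a<K. g (js ! a) (ls ! a)) * T ls else 0)"
    using vanish by (intro sum.cong) auto
  also have "\<dots> = (\<Prod>a<K. g (js ! a) (?ls ! a)) * T ?ls"
    using map_permutes_in_tidx[OF js mono_perm_permutes[OF g]] finite_tidx by simp
  also have "(\<Prod>a<K. g (js ! a) (?ls ! a)) = (\<Prod>a<K. mono_coeff n g (js ! a))"
    using len_js by (intro prod.cong) (auto simp: mono_coeff_def)
  finally show ?thesis using js by (simp add: tens_act_def)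
qed

lemma tens_act_mmul:
  assumes x: "monomial_mat n x" and g: "monomial_mat n g" and js: "js \<in> tidx n K"
  shows "tens_act n K x (tens_act n K g T) js = tens_act n K (mmul n x g) T js"
proof -
  have len_js: "length js = K" and js_less: "\<And>a. a < K \<Longrightarrow> js ! a < n"
    using js by (auto simp: tidx_def dest!: nth_mem)
  have js': "map (mono_perm n x) js \<in> tidx n K" by (rule map_permutes_in_tidx[OF js mono_perm_permutes[OF x]])
  have "tens_act n K x (tens_act n K g T) js
     = (\<Prod>a<K. mono_coeff n x (js ! a)) * ((\<Prod>a<K. mono_coeff n g (map (mono_perm n x) js ! a))
         * T (map (mono_perm n g) (map (mono_perm n x) js)))"
    by (simp add: tens_act_monomial[OF x js] tens_act_monomial[OF g js'])
  also have "\<dots> = (\<Prod>a<K. mono_coeff n x (js ! a) * mono_coeff n g (mono_perm n x (js ! a)))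
      * T (map (mono_perm n g \<circ> mono_perm n x) js)"
    using len_js by (simp add: prod.distrib)
  also have "\<dots> = tens_act n K (mmul n x g) T js"
    using js_less by (auto simp: tens_act_monomial[OF monomial_mat_mmul[OF x g] js]
        mono_perm_mmul[OF x g] mono_coeff_mmul[OF x g] intro!: prod.cong)
  finally show ?thesis .
qed

lemma tens_act_add: "tens_act n K g (\<lambda>x. u x + v x) = (\<lambda>y. tens_act n K g u y + tens_act n K g v y)"
  by (auto simp: tens_act_def fun_eq_iff distrib_left sum.distrib)

lemma tens_act_scale: "tens_act n K g (\<lambda>x. c * u x) = (\<lambda>y. c * tens_act n K g u y)"
  by (auto simp: tens_act_def fun_eq_iff sum_distrib_left mult.left_commute)

section \<open>Consecutive blocks of positions\<close>

lemma offs_Suc: "offs l (Suc j) = offs l j + (if j < length l then l ! j else 0)"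
  by (simp add: offs_def take_Suc_conv_app_nth)

lemma offs_mono: "j \<le> j' \<Longrightarrow> offs l j \<le> offs l j'"
  by (induction j' rule: dec_induct) (auto simp: offs_Suc)

lemma offs_le_sum_list: "offs l j \<le> sum_list l"
  using offs_mono[of j "max j (length l)" l] by (simp add: offs_def)

lemma offs_0 [simp]: "offs l 0 = 0"
  by (simp add: offs_def)

lemma offs_length [simp]: "offs l (length l) = sum_list l"
  by (simp add: offs_def)

definition block_index :: "nat list \<Rightarrow> nat \<Rightarrow> nat" where
  "block_index l a = (LEAST j. a < offs l (Suc j))"

lemma block_index_eqI:
  assumes "offs l j \<le> a" "a < offs l (Suc j)"
  shows "block_index l a = j"
  unfolding block_index_def
proof (rule Least_equality)
  fix j' assume "a < offs l (Suc j')"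
  then show "j \<le> j'" using assms(1) offs_mono[of "Suc j'" j l] by (meson not_less_eq_eq order.trans leD)
qed fact

lemma block_index_bounds:
  assumes "a < sum_list l"
  shows "block_index l a < length l" "offs l (block_index l a) \<le> a" "a < offs l (Suc (block_index l a))"
proof -
  have "\<exists>j. offs l j \<le> a \<and> a < offs l (Suc j)"
  proof (rule ccontr)
    assume "\<nexists>j. offs l j \<le> a \<and> a < offs l (Suc j)"
    then have "offs l j \<le> a" for j by (induction j) (auto simp: not_less)
    then show False using assms offs_length[of l] by (metis not_le)
  qed
  then obtain j where j: "offs l j \<le> a" "a < offs l (Suc j)" by blast
  then have "j < length l" using offs_Suc[of l j] by (auto split: if_splits)
  then show "block_index l a < length l" "offs l (block_index l a) \<le> a" "a < offs l (Suc (block_index l a))"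
    using j block_index_eqI[OF j] by simp_all
qed

lemma block_interval_eq:
  assumes "j < length l"
  shows "{offs l j..<offs l (Suc j)} = {a. a < sum_list l \<and> block_index l a = j}"
  using block_index_bounds block_index_eqI offs_le_sum_list[of l "Suc j"] by fastforce

lemma card_block:
  assumes "j < length l"
  shows "card {a. a < sum_list l \<and> block_index l a = j} = l ! j"
  by (simp flip: block_interval_eq[OF assms] add: offs_Suc assms)

lemma (in comm_monoid_set) block_index_group:
  "F (\<lambda>j. F g {a. a < sum_list l \<and> block_index l a = j}) {..<length l} = F g {..<sum_list l}"
  using group[of "{..<sum_list l}" "{..<length l}" "block_index l" g] block_index_bounds(1) by auto

lemma image_mset_sum: "image_mset f (\<Sum>i\<in>A. M i) = (\<Sum>i\<in>A. image_mset f (M i))"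
  by (induction A rule: infinite_finite_induct) auto

lemma image_mset_block_index:
  "image_mset (block_index l) (mset_set {..<sum_list l}) = (\<Sum>j<length l. replicate_mset (l ! j) j)"
proof (rule multiset_eqI)
  fix j
  have "count (image_mset (block_index l) (mset_set {..<sum_list l})) j
      = card {a. a < sum_list l \<and> block_index l a = j}"
    by (simp add: count_image_mset_eq_card_vimage)
  also have "\<dots> = (if j < length l then l ! j else 0)"
    using card_block[of j l] block_index_bounds(1)[of _ l] by (auto simp: card_eq_0_iff)
  also have "\<dots> = count (\<Sum>j<length l. replicate_mset (l ! j) j) j"
    by (simp add: count_sum)
  finally show "count (image_mset (block_index l) (mset_set {..<sum_list l})) j
      = count (\<Sum>j<length l. replicate_mset (l ! j) j) j" .
qed

lemma block_perm_iff:
  "block_perm ks p \<longleftrightarrow>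
     p permutes {..<sum_list ks} \<and> (\<forall>a<sum_list ks. block_index ks (p a) = block_index ks a)"
  (is "_ \<longleftrightarrow> ?perm \<and> ?idx")
proof -
  let ?B = "\<lambda>j. {a. a < sum_list ks \<and> block_index ks a = j}"
  have "?idx \<longleftrightarrow> (\<forall>j<length ks. p ` ?B j = ?B j)" if p: ?perm
  proof
    assume idx: ?idx
    show "\<forall>j<length ks. p ` ?B j = ?B j"
    proof (intro allI impI equalityI subsetI)
      fix j b assume b: "b \<in> ?B j"
      have "inv p b < sum_list ks" "p (inv p b) = b"
        using permutes_in_image[OF permutes_inv[OF p]] permutes_inverses(1)[OF p] b by auto
      with b idx show "b \<in> p ` ?B j" by (intro image_eqI[of _ _ "inv p b"]) auto
    qed (use idx permutes_in_image[OF p] in auto)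
  next
    assume blocks: "\<forall>j<length ks. p ` ?B j = ?B j"
    show ?idx
    proof (intro allI impI)
      fix a assume a: "a < sum_list ks"
      then have "p a \<in> p ` ?B (block_index ks a)" by blast
      then show "block_index ks (p a) = block_index ks a"
        using blocks block_index_bounds(1)[OF a] by blast
    qed
  qed
  then show ?thesis unfolding block_perm_def using block_interval_eq by auto
qed

section \<open>Coordinate labels and multiset partitions\<close>

text \<open>Blocks are numbered from 1 in labels, as in \<open>target_mset\<close>. The labels determine
  \<open>e_js\<close> up to permutations within the blocks, and the nonempty ones form a multiset
  partition of \<open>target_mset ks\<close>.\<close>

definition coord_label :: "nat list \<Rightarrow> nat list \<Rightarrow> nat \<Rightarrow> nat multiset" where
  "coord_label ks js i =
     image_mset (\<lambda>a. Suc (block_index ks a)) (mset_set {a. a < length js \<and> js ! a = i})"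

lemma count_coord_label_Suc:
  "count (coord_label ks js i) (Suc j) = card {a. a < length js \<and> block_index ks a = j \<and> js ! a = i}"
  by (simp add: coord_label_def count_image_mset_eq_card_vimage conj_commute conj_left_commute)

lemma zero_not_in_coord_label: "0 \<notin># coord_label ks js i"
  by (auto simp: coord_label_def)

lemma coord_label_map_inj:
  assumes "inj s"
  shows "coord_label ks (map s js) (s i) = coord_label ks js i"
proof -
  have "{a. a < length js \<and> map s js ! a = s i} = {a. a < length js \<and> js ! a = i}"
    using assms by (auto simp: inj_eq)
  then show ?thesis by (simp add: coord_label_def)
qed

lemma coord_label_map_permutes:
  assumes "s permutes S"
  shows "coord_label ks (map s js) i = coord_label ks js (inv s i)"
  using coord_label_map_inj[OF permutes_inj[OF assms], of ks js "inv s i"]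
  by (simp add: permutes_inverses(1)[OF assms])

lemma permutes_image_Collect:
  assumes p: "p permutes {..<K}"
  shows "p ` {a. a < K \<and> Q (p a)} = {b. b < K \<and> Q b}"
proof (intro equalityI subsetI)
  fix b assume b: "b \<in> {b. b < K \<and> Q b}"
  have "inv p b < K" "p (inv p b) = b"
    using permutes_in_image[OF permutes_inv[OF p]] permutes_inverses(1)[OF p] b by auto
  with b show "b \<in> p ` {a. a < K \<and> Q (p a)}" by (intro image_eqI[of _ _ "inv p b"]) auto
qed (use permutes_in_image[OF p] in auto)

lemma coord_label_block_perm:
  assumes bp: "block_perm ks p" and len: "length js = sum_list ks"
  shows "coord_label ks (map (\<lambda>a. js ! p a) [0..<sum_list ks]) = coord_label ks js"
proof
  fix i
  let ?K = "sum_list ks" and ?A = "{a. a < sum_list ks \<and> js ! p a = i}"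
  have p: "p permutes {..<?K}" and idx: "\<And>a. a < ?K \<Longrightarrow> block_index ks (p a) = block_index ks a"
    using bp by (auto simp: block_perm_iff)
  have "{a. a < ?K \<and> map (\<lambda>a. js ! p a) [0..<?K] ! a = i} = ?A" by auto
  then have "coord_label ks (map (\<lambda>a. js ! p a) [0..<?K]) i
      = image_mset (\<lambda>a. Suc (block_index ks a)) (mset_set ?A)"
    by (simp add: coord_label_def)
  also have "\<dots> = image_mset (\<lambda>a. Suc (block_index ks a)) (image_mset p (mset_set ?A))"
    unfolding image_mset.compositionality o_def using idx by (intro image_mset_cong) auto
  also have "image_mset p (mset_set ?A) = mset_set (p ` ?A)"
    using inj_on_subset[OF permutes_inj[OF p] subset_UNIV] by (rule image_mset_mset_set)
  also have "p ` ?A = {a. a < length js \<and> js ! a = i}"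
    using permutes_image_Collect[OF p, of "\<lambda>b. js ! b = i"] len by simp
  finally show "coord_label ks (map (\<lambda>a. js ! p a) [0..<?K]) i = coord_label ks js i"
    by (simp add: coord_label_def)
qed

lemma coord_label_eq_imp_block_perm:
  assumes len: "length js = sum_list ks" "length js' = sum_list ks"
    and eq: "coord_label ks js = coord_label ks js'"
  obtains p where "block_perm ks p" "map (\<lambda>a. js ! p a) [0..<sum_list ks] = js'"
proof -
  let ?K = "sum_list ks"
  txt \<open>The labels determine how often each pair (block, coordinate) occurs; a permutation
    matching these pairs for \<open>js'\<close> and \<open>js\<close> preserves the blocks.\<close>
  have "image_mset (\<lambda>a. (block_index ks a, js' ! a)) (mset_set {..<?K})
      = image_mset (\<lambda>a. (block_index ks a, js ! a)) (mset_set {..<?K})"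
  proof (rule multiset_eqI)
    fix x :: "nat \<times> nat"
    obtain j i where x: "x = (j, i)" by fastforce
    have "count (image_mset (\<lambda>a. (block_index ks a, ys ! a)) (mset_set {..<?K})) x
        = count (coord_label ks ys i) (Suc j)" if "length ys = ?K" for ys
      using that by (simp add: x count_image_mset_eq_card_vimage count_coord_label_Suc)
    then show "count (image_mset (\<lambda>a. (block_index ks a, js' ! a)) (mset_set {..<?K})) x
        = count (image_mset (\<lambda>a. (block_index ks a, js ! a)) (mset_set {..<?K})) x"
      using len eq by simp
  qed
  then obtain p where p: "p permutes {..<?K}"
    and fibres: "\<forall>a\<in>{..<?K}. (block_index ks a, js' ! a) = (block_index ks (p a), js ! p a)"
    by (rule image_mset_eq_implies_permutes[OF finite_lessThan])
  have "block_perm ks p" using p fibres by (simp add: block_perm_iff)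
  moreover have "map (\<lambda>a. js ! p a) [0..<?K] = js'"
    using fibres len by (intro nth_equalityI) auto
  ultimately show ?thesis by (rule that)
qed

lemma symtens_eq_if_coord_label_eq:
  assumes T: "T \<in> symtens_space n ks" and js: "js \<in> tidx n (sum_list ks)"
    and js': "js' \<in> tidx n (sum_list ks)" and eq: "coord_label ks js = coord_label ks js'"
  shows "T js = T js'"
proof -
  have "length js = sum_list ks" "length js' = sum_list ks" using js js' by (simp_all add: tidx_def)
  then obtain p where "block_perm ks p" "map (\<lambda>a. js ! p a) [0..<sum_list ks] = js'"
    using eq by (rule coord_label_eq_imp_block_perm)
  then show ?thesis using T js by (auto simp: symtens_space_def)
qed

lemma sum_singletons_eq_image_mset: "(\<Sum>a\<in>A. {#f a#}) = image_mset f (mset_set A)"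
  by (simp add: sum_unfold_sum_mset)

lemma sum_coord_label:
  assumes "length js = sum_list ks" "set js \<subseteq> {..<n}"
  shows "(\<Sum>i<n. coord_label ks js i) = target_mset ks"
proof -
  let ?K = "sum_list ks" and ?f = "\<lambda>a. {#Suc (block_index ks a)#}"
  have js_less: "js ! a < n" if "a < ?K" for a
    using assms(2) nth_mem[of a js] that unfolding assms(1) by blast
  have "(\<Sum>i<n. coord_label ks js i) = (\<Sum>i<n. \<Sum>a\<in>{a. a \<in> {..<?K} \<and> js ! a = i}. ?f a)"
    using assms(1) by (simp add: coord_label_def sum_singletons_eq_image_mset)
  also have "\<dots> = image_mset Suc (image_mset (block_index ks) (mset_set {..<?K}))"
    using js_less by (subst sum.group) (auto simp: sum_singletons_eq_image_mset image_mset.compositionality o_def)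
  also have "\<dots> = target_mset ks"
    by (simp add: image_mset_block_index image_mset_sum target_mset_def)
  finally show ?thesis .
qed

lemma prod_nth_eq_prod_power_coord_label:
  assumes "set js \<subseteq> {..<n}"
  shows "(\<Prod>a<length js. f (js ! a)) = (\<Prod>i<n. f i ^ size (coord_label ks js i))"
proof -
  have "(\<Prod>a<length js. f (js ! a)) = (\<Prod>i<n. \<Prod>a\<in>{a. a \<in> {..<length js} \<and> js ! a = i}. f (js ! a))"
    using assms nth_mem by (intro prod.group[symmetric]) auto
  also have "\<dots> = (\<Prod>i<n. f i ^ size (coord_label ks js i))"
    by (intro prod.cong refl) (simp add: coord_label_def)
  finally show ?thesis .
qed

text \<open>A standard index list with prescribed labels \<open>c\<close>: inside block \<open>j\<close> the
  coordinates \<open>i < n\<close> appear in increasing order, each one \<open>count (c i) (Suc j)\<close> times.\<close>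

definition label_index :: "nat \<Rightarrow> nat list \<Rightarrow> (nat \<Rightarrow> nat multiset) \<Rightarrow> nat list" where
  "label_index n ks c = map (\<lambda>a. let j = block_index ks a in
      block_index (map (\<lambda>i. count (c i) (Suc j)) [0..<n]) (a - offs ks j)) [0..<sum_list ks]"

lemma length_label_index [simp]: "length (label_index n ks c) = sum_list ks"
  by (simp add: label_index_def)

lemma nth_label_index:
  "a < sum_list ks \<Longrightarrow> label_index n ks c ! a =
     block_index (map (\<lambda>i. count (c i) (Suc (block_index ks a))) [0..<n]) (a - offs ks (block_index ks a))"
  by (simp add: label_index_def Let_def)

lemma offs_block_index_less:
  assumes "a < sum_list ks"
  shows "a - offs ks (block_index ks a) < ks ! block_index ks a"
  using block_index_bounds[OF assms] offs_Suc[of ks "block_index ks a"] by auto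

context
  fixes n :: nat and ks :: "nat list" and c :: "nat \<Rightarrow> nat multiset"
  assumes cnt: "\<And>j. j < length ks \<Longrightarrow> (\<Sum>i<n. count (c i) (Suc j)) = ks ! j"
begin

lemma sum_list_label_counts:
  "j < length ks \<Longrightarrow> sum_list (map (\<lambda>i. count (c i) (Suc j)) [0..<n]) = ks ! j"
  using cnt by (simp add: interv_sum_list_conv_sum_set_nat atLeast0LessThan)

lemma label_index_in_tidx: "label_index n ks c \<in> tidx n (sum_list ks)"
proof -
  have "label_index n ks c ! a < n" if "a < sum_list ks" for a
    using block_index_bounds(1)[of _ "map (\<lambda>i. count (c i) (Suc (block_index ks a))) [0..<n]"]
      offs_block_index_less[OF that] block_index_bounds(1)[OF that] sum_list_label_counts
    by (simp add: nth_label_index[OF that])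
  then show ?thesis by (auto simp: tidx_def in_set_conv_nth)
qed

lemma count_coord_label_label_index:
  assumes j: "j < length ks" and i: "i < n"
  shows "count (coord_label ks (label_index n ks c) i) (Suc j) = count (c i) (Suc j)"
proof -
  let ?li = "label_index n ks c" and ?cnts = "map (\<lambda>i. count (c i) (Suc j)) [0..<n]"
  have "{a. a < length ?li \<and> block_index ks a = j \<and> ?li ! a = i}
      = (+) (offs ks j) ` {t. t < sum_list ?cnts \<and> block_index ?cnts t = i}"
  proof (intro equalityI subsetI)
    fix a assume a: "a \<in> {a. a < length ?li \<and> block_index ks a = j \<and> ?li ! a = i}"
    then have "a < sum_list ks" "block_index ks a = j" by auto
    then show "a \<in> (+) (offs ks j) ` {t. t < sum_list ?cnts \<and> block_index ?cnts t = i}"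
      using a offs_block_index_less block_index_bounds(2) sum_list_label_counts[OF j]
      by (intro image_eqI[of _ _ "a - offs ks j"]) (auto simp: nth_label_index)
  next
    fix a assume "a \<in> (+) (offs ks j) ` {t. t < sum_list ?cnts \<and> block_index ?cnts t = i}"
    then obtain t where t: "t < ks ! j" "block_index ?cnts t = i" "a = offs ks j + t"
      using sum_list_label_counts[OF j] by auto
    then have "a \<in> {offs ks j..<offs ks (Suc j)}" using j by (simp add: offs_Suc)
    then have "a < sum_list ks" "block_index ks a = j" using block_interval_eq[OF j] by auto
    then show "a \<in> {a. a < length ?li \<and> block_index ks a = j \<and> ?li ! a = i}"
      using t by (simp add: nth_label_index)
  qed
  then have "count (coord_label ks ?li i) (Suc j) = card {t. t < sum_list ?cnts \<and> block_index ?cnts t = i}"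
    by (simp add: count_coord_label_Suc card_image)
  also have "\<dots> = count (c i) (Suc j)"
    using card_block[of i ?cnts] i by simp
  finally show ?thesis .
qed

lemma coord_label_label_index:
  assumes range: "set_mset (c i) \<subseteq> {1..length ks}" and i: "i < n"
  shows "coord_label ks (label_index n ks c) i = c i"
proof (rule multiset_eqI)
  fix x
  show "count (coord_label ks (label_index n ks c) i) x = count (c i) x"
  proof (cases x)
    case 0
    then show ?thesis using zero_not_in_coord_label range by (auto simp: not_in_iff)
  next
    case (Suc j)
    show ?thesis
    proof (cases "j < length ks")
      case True
      then show ?thesis using Suc count_coord_label_label_index i by simp
    next
      case False
      then have "Suc j \<notin># c i" using range by auto
      moreover have "block_index ks a \<noteq> j" if "a < sum_list ks" for a
        using block_index_bounds(1)[OF that] False by auto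
      ultimately show ?thesis by (auto simp: Suc count_coord_label_Suc not_in_iff)
    qed
  qed
qed

end

definition multiset_partitions_le :: "nat \<Rightarrow> 'a multiset \<Rightarrow> 'a multiset multiset set" where
  "multiset_partitions_le n M = {P \<in> multiset_partitions M. size P \<le> n}"

definition pad_parts :: "nat \<Rightarrow> 'a multiset multiset \<Rightarrow> 'a multiset multiset" where
  "pad_parts n P = P + replicate_mset (n - size P) {#}"

lemma pad_parts_filter_nonempty:
  assumes "size X = n"
  shows "pad_parts n (filter_mset (\<lambda>A. A \<noteq> {#}) X) = X"
proof -
  have X: "X = filter_mset (\<lambda>A. A \<noteq> {#}) X + replicate_mset (count X {#}) {#}"
    using multiset_partition[of X "\<lambda>A. A \<noteq> {#}"] by (simp add: filter_eq_replicate_mset)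
  then have "size (filter_mset (\<lambda>A. A \<noteq> {#}) X) + count X {#} = n"
    using assms by (metis size_union size_replicate_mset)
  then have "n - size (filter_mset (\<lambda>A. A \<noteq> {#}) X) = count X {#}" by simp
  then show ?thesis using X by (simp add: pad_parts_def)
qed

lemma filter_nonempty_pad_parts:
  assumes "{#} \<notin># P"
  shows "filter_mset (\<lambda>A. A \<noteq> {#}) (pad_parts n P) = P"
proof -
  have "filter_mset (\<lambda>A. A \<noteq> {#}) P = P"
    using assms by (auto intro: filter_mset_eq_conv[THEN iffD2])
  moreover have "filter_mset (\<lambda>A. A \<noteq> {#}) (replicate_mset k {#}) = {#}" for k
    by (induction k) auto
  ultimately show ?thesis by (simp add: pad_parts_def)
qed

lemma sum_mset_pad_parts [simp]: "sum_mset (pad_parts n P) = sum_mset P"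
proof -
  have "sum_mset (replicate_mset k ({#} :: 'a multiset)) = {#}" for k by (induction k) auto
  then show ?thesis by (simp add: pad_parts_def)
qed

definition label_partition :: "nat \<Rightarrow> nat list \<Rightarrow> nat list \<Rightarrow> nat multiset multiset" where
  "label_partition n ks js = filter_mset (\<lambda>A. A \<noteq> {#}) (image_mset (coord_label ks js) (mset_set {..<n}))"

lemma image_coord_label:
  "image_mset (coord_label ks js) (mset_set {..<n}) = pad_parts n (label_partition n ks js)"
  by (simp add: label_partition_def pad_parts_filter_nonempty)

lemma label_partition_eqI:
  assumes "{#} \<notin># P" "image_mset (coord_label ks js) (mset_set {..<n}) = pad_parts n P"
  shows "label_partition n ks js = P"
  using assms by (simp add: label_partition_def filter_nonempty_pad_parts)

lemma label_partition_in_partitions: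
  assumes js: "js \<in> tidx n (sum_list ks)"
  shows "label_partition n ks js \<in> multiset_partitions_le n (target_mset ks)"
proof -
  have "sum_mset (label_partition n ks js) = sum_mset (image_mset (coord_label ks js) (mset_set {..<n}))"
    by (simp add: image_coord_label)
  also have "\<dots> = target_mset ks"
    using sum_coord_label js by (simp add: tidx_def flip: sum_unfold_sum_mset)
  finally show ?thesis
    using size_filter_mset_lesseq[of _ "image_mset (coord_label ks js) (mset_set {..<n})"]
    by (auto simp: multiset_partitions_le_def multiset_partitions_def label_partition_def)
qed

section \<open>Labellings adapted to \<open>M\<close>-tilde\<close>

definition label_weight :: "nat \<Rightarrow> (nat \<Rightarrow> 'a multiset) \<Rightarrow> cmat \<Rightarrow> complex" where
  "label_weight n c x = (\<Prod>i<n. mono_coeff n x i ^ size (c i))"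

definition block_comp :: "(nat \<times> 'a multiset) list \<Rightarrow> (nat \<times> int) list" where
  "block_comp CL = map (\<lambda>(r, A). (r, int (size A))) CL"

definition block_labelling :: "(nat \<times> 'a multiset) list \<Rightarrow> nat \<Rightarrow> 'a multiset" where
  "block_labelling CL i = snd (CL ! block_index (map fst CL) i)"

lemma map_fst_block_comp [simp]: "map fst (block_comp CL) = map fst CL"
  by (simp add: block_comp_def case_prod_beta)

lemma length_block_comp [simp]: "length (block_comp CL) = length CL"
  by (simp add: block_comp_def)

lemma nth_block_comp [simp]:
  "k < length CL \<Longrightarrow> block_comp CL ! k = (fst (CL ! k), int (size (snd (CL ! k))))"
  by (simp add: block_comp_def case_prod_beta)

lemma cblock_eq_offs: "cblock cs k = {offs (map fst cs) k..<offs (map fst cs) (Suc k)}"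
  by (simp add: cblock_def offs_def take_map)

context
  fixes CL :: "(nat \<times> 'a multiset) list" and n :: nat
  assumes sum_CL: "sum_list (map fst CL) = n" and distinct_CL: "distinct (map snd CL)"
begin

lemma block_index_less_length: "a < n \<Longrightarrow> block_index (map fst CL) a < length CL"
  using block_index_bounds(1)[of a "map fst CL"] sum_CL by simp

lemma cblock_block_comp:
  "k < length CL \<Longrightarrow> cblock (block_comp CL) k = {a. a < n \<and> block_index (map fst CL) a = k}"
  using block_interval_eq[of k "map fst CL"] sum_CL by (simp add: cblock_eq_offs)

lemma block_labelling_eq_iff:
  assumes "i < n" "j < n"
  shows "block_labelling CL i = block_labelling CL j \<longleftrightarrow>
      block_index (map fst CL) i = block_index (map fst CL) j"
  using block_index_bounds(1)[of _ "map fst CL"] assms sum_CL distinct_CL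
  by (auto simp: block_labelling_def distinct_conv_nth)

lemma blockdiag_block_comp_iff:
  "blockdiag n (block_comp CL) h \<longleftrightarrow>
     monomial_mat n h \<and> (\<forall>i<n. block_labelling CL (mono_perm n h i) = block_labelling CL i)"
proof (cases "monomial_mat n h")
  case h: True
  let ?bi = "block_index (map fst CL)"
  have same_block: "(\<exists>k<length CL. i \<in> cblock (block_comp CL) k \<and> j \<in> cblock (block_comp CL) k)
      \<longleftrightarrow> j < n \<and> ?bi j = ?bi i" if i: "i < n" for i j
    using block_index_less_length[OF i] i by (auto simp: cblock_block_comp)
  have "blockdiag n (block_comp CL) h \<longleftrightarrow> (\<forall>i<n. ?bi (mono_perm n h i) = ?bi i)"
    using h mono_perm_spec(1)[OF h] by (auto simp: blockdiag_def monomial_mat_nonzero_iff same_block)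
  then show ?thesis using h mono_perm_spec(1)[OF h] by (simp add: block_labelling_eq_iff)
qed (simp add: blockdiag_def)

lemma block_char_block_comp:
  assumes bd: "blockdiag n (block_comp CL) h"
  shows "block_char (block_comp CL) h = label_weight n (block_labelling CL) h"
proof -
  let ?bi = "block_index (map fst CL)"
  let ?B = "\<lambda>k. {a. a < n \<and> ?bi a = k}"
  have h: "monomial_mat n h" and stab: "\<And>i. i < n \<Longrightarrow> ?bi (mono_perm n h i) = ?bi i"
    using bd mono_perm_spec(1) by (auto simp: blockdiag_block_comp_iff block_labelling_eq_iff)
  have row: "(\<Prod>j\<in>?B k. if h i j = 0 then 1 else h i j) = mono_coeff n h i" if i: "i \<in> ?B k" for i k
  proof -
    have "(\<Prod>j\<in>?B k. if h i j = 0 then 1 else h i j)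
        = (\<Prod>j\<in>?B k. if j = mono_perm n h i then mono_coeff n h i else 1)"
      using monomial_mat_nonzero_iff[OF h, of i] i by (intro prod.cong refl) (auto simp: mono_coeff_def)
    also have "\<dots> = mono_coeff n h i"
      using i stab mono_perm_spec(1)[OF h] by simp
    finally show ?thesis .
  qed
  have "block_char (block_comp CL) h = (\<Prod>k<length CL. (\<Prod>i\<in>?B k. mono_coeff n h i) ^ size (snd (CL ! k)))"
    unfolding block_char_def
  proof (rule prod.cong)
    fix k assume k: "k \<in> {..<length CL}"
    have "(\<Prod>i\<in>?B k. \<Prod>j\<in>?B k. if h i j = 0 then 1 else h i j) = (\<Prod>i\<in>?B k. mono_coeff n h i)"
      by (rule prod.cong[OF refl row])
    then show "(\<Prod>i\<in>cblock (block_comp CL) k. \<Prod>j\<in>cblock (block_comp CL) k. if h i j = 0 then 1 else h i j)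
          powi snd (block_comp CL ! k)
        = (\<Prod>i\<in>?B k. mono_coeff n h i) ^ size (snd (CL ! k))"
      using k by (simp add: cblock_block_comp power_int_of_nat)
  qed simp
  also have "\<dots> = (\<Prod>k<length CL. \<Prod>i\<in>?B k. mono_coeff n h i ^ size (block_labelling CL i))"
    by (intro prod.cong refl) (simp add: block_labelling_def prod_power_distrib)
  also have "\<dots> = label_weight n (block_labelling CL) h"
    using prod.block_index_group[of _ "map fst CL"] sum_CL by (simp add: label_weight_def)
  finally show ?thesis .
qed

lemma image_block_labelling:
  "image_mset (block_labelling CL) (mset_set {..<n}) = (\<Sum>(r, A)\<leftarrow>CL. replicate_mset r A)"
proof -
  have "image_mset (block_labelling CL) (mset_set {..<n})
      = image_mset (\<lambda>k. snd (CL ! k)) (image_mset (block_index (map fst CL)) (mset_set {..<n}))"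
    by (simp add: image_mset.compositionality o_def block_labelling_def[abs_def])
  also have "\<dots> = (\<Sum>(r, A)\<leftarrow>CL. replicate_mset r A)"
    using image_mset_block_index[of "map fst CL"] sum_CL
    by (simp add: image_mset_sum sum_list_sum_nth atLeast0LessThan case_prod_beta)
  finally show ?thesis .
qed

end

lemma sum_list_concat: "sum_list (concat xss) = sum_list (map sum_list xss)"
  by (induction xss) auto

lemma sum_replicate_count: "(\<Sum>A\<in>set_mset P. replicate_mset (count P A) A) = P"
  by (rule multiset_eqI) (simp add: count_sum not_in_iff)

lemma distinct_list_with_values:
  assumes "finite D" "mset ys = image_mset f (mset_set D)"
  obtains xs where "distinct xs" "set xs = D" "map f xs = ys"
proof -
  obtain es where es: "distinct es" "set es = D" using finite_distinct_list[OF assms(1)] by blast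
  then have "mset ys = mset (map f es)" using assms(2) by (simp flip: mset_set_set)
  then obtain p where p: "p permutes {..<length (map f es)}" "permute_list p (map f es) = ys"
    by (rule mset_eq_permutation)
  then have p': "p permutes {..<length es}" by simp
  show ?thesis
  proof (rule that[of "permute_list p es"])
    show "distinct (permute_list p es)" "set (permute_list p es) = D"
      using es mset_permute_list[OF p'] by (metis distinct_permute_list p', metis set_mset_mset)
    show "map f (permute_list p es) = ys" using p(2) by (simp add: permute_list_map[OF p'])
  qed
qed

lemma length_mtype: "length (mtype P) = Max (insert 0 (size ` set_mset P))"
  by (simp add: mtype_def del: upt_Suc)

lemma nth_mtype:
  "i < length (mtype P) \<Longrightarrow> mtype P ! i = image_mset (count P) (mset_set {A \<in> set_mset P. size A = Suc i})"
  by (simp add: mtype_def type_part_def del: upt_Suc)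

lemma mtype_part_lists:
  fixes P :: "'a multiset multiset"
  obtains As where "\<And>i. i < length (mtype P) \<Longrightarrow> distinct (As i) \<and>
    set (As i) = {A \<in> set_mset P. size A = Suc i} \<and>
    map (count P) (As i) = rev (sorted_list_of_multiset (mtype P ! i))"
proof -
  have "\<exists>xs. i < length (mtype P) \<longrightarrow> distinct xs \<and> set xs = {A \<in> set_mset P. size A = Suc i} \<and>
      map (count P) xs = rev (sorted_list_of_multiset (mtype P ! i))" for i
  proof (cases "i < length (mtype P)")
    case True
    have "finite {A \<in> set_mset P. size A = Suc i}" by simp
    moreover have "mset (rev (sorted_list_of_multiset (mtype P ! i)))
        = image_mset (count P) (mset_set {A \<in> set_mset P. size A = Suc i})"
      using nth_mtype[OF True] by simp
    ultimately obtain xs where "distinct xs" "set xs = {A \<in> set_mset P. size A = Suc i}"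
      "map (count P) xs = rev (sorted_list_of_multiset (mtype P ! i))"
      by (rule distinct_list_with_values)
    then show ?thesis by blast
  qed simp
  then show ?thesis using that by metis
qed

lemma UN_parts_by_size:
  assumes nonempty: "{#} \<notin># P"
  shows "(\<Union>i<length (mtype P). {A \<in> set_mset P. size A = Suc i}) = set_mset P"
proof (intro equalityI subsetI)
  fix A assume A: "A \<in># P"
  then obtain s where "size A = Suc s" using nonempty by (cases "size A") auto
  moreover have "size A \<le> length (mtype P)" using A by (auto simp: length_mtype)
  ultimately show "A \<in> (\<Union>i<length (mtype P). {A \<in> set_mset P. size A = Suc i})" using A by auto
qed auto

lemma mtype_enumeration:
  fixes P :: "'a multiset multiset"
  assumes nonempty: "{#} \<notin># P"
  obtains L where "distinct L" "set L = set_mset P"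
    "concat (map (\<lambda>i. map (\<lambda>r. (r, int (Suc i))) (rev (sorted_list_of_multiset (mtype P ! i))))
        [0..<length (mtype P)])
      = map (\<lambda>A. (count P A, int (size A))) L"
proof -
  define Mx where "Mx = length (mtype P)"
  define D where "D s = {A \<in> set_mset P. size A = s}" for s
  obtain As where As: "\<And>i. i < Mx \<Longrightarrow> distinct (As i) \<and> set (As i) = D (Suc i) \<and>
      map (count P) (As i) = rev (sorted_list_of_multiset (mtype P ! i))"
    using mtype_part_lists unfolding Mx_def D_def by blast
  define L where "L = concat (map As [0..<Mx])"
  show ?thesis
  proof (rule that[of L])
    have "disjoint_family_on (set \<circ> As) (set [0..<Mx])"
      using As by (auto simp: disjoint_family_on_def D_def)
    then show "distinct L"
      using As distinct_list_bind[of "[0..<Mx]" As] by (simp add: L_def List.bind_def)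
    show "set L = set_mset P"
      using As UN_parts_by_size[OF nonempty] by (simp add: L_def atLeast0LessThan Mx_def D_def)
    have "map (\<lambda>r. (r, int (Suc i))) (rev (sorted_list_of_multiset (mtype P ! i)))
        = map (\<lambda>A. (count P A, int (size A))) (As i)" if "i \<in> set [0..<Mx]" for i
    proof -
      have i: "i < Mx" using that by simp
      then have "map (\<lambda>r. (r, int (Suc i))) (rev (sorted_list_of_multiset (mtype P ! i)))
          = map ((\<lambda>r. (r, int (Suc i))) \<circ> count P) (As i)"
        using As by (simp flip: map_map)
      also have "\<dots> = map (\<lambda>A. (count P A, int (size A))) (As i)"
        using As[OF i] by (intro map_cong) (auto simp: D_def)
      finally show ?thesis .
    qed
    then show "concat (map (\<lambda>i. map (\<lambda>r. (r, int (Suc i))) (rev (sorted_list_of_multiset (mtype P ! i))))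
        [0..<length (mtype P)]) = map (\<lambda>A. (count P A, int (size A))) L"
      unfolding Mx_def[symmetric] L_def map_concat map_map o_def by (intro arg_cong[of _ _ concat] map_cong) auto
  qed
qed

lemma Mtilde_comp_mtype:
  fixes P :: "'a multiset multiset"
  assumes nonempty: "{#} \<notin># P"
  obtains L where "distinct L" "set L = set_mset P"
    "Mtilde_comp n (mtype P) =
       (if n - size P = 0 then [] else [(n - size P, 0)]) @ map (\<lambda>A. (count P A, int (size A))) L"
proof -
  let ?blocks = "concat (map (\<lambda>i. map (\<lambda>r. (r, int (Suc i))) (rev (sorted_list_of_multiset (mtype P ! i))))
      [0..<length (mtype P)])"
  obtain L where L: "distinct L" "set L = set_mset P" "?blocks = map (\<lambda>A. (count P A, int (size A))) L"
    using mtype_enumeration[OF nonempty] by blast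
  have "sum_list (map sum_mset (mtype P)) = sum_list (map fst ?blocks)"
  proof -
    have sum_sorted: "sum_list (sorted_list_of_multiset M) = sum_mset M" for M :: "nat multiset"
      by (metis mset_sorted_list_of_multiset sum_mset_sum_list)
    have "sum_list (map fst ?blocks) = sum_list (map (\<lambda>i. sum_mset (mtype P ! i)) [0..<length (mtype P)])"
      by (simp add: map_concat sum_list_concat o_def sum_sorted)
    also have "\<dots> = sum_list (map sum_mset (mtype P))"
      by (subst (2) map_nth[symmetric]) (simp add: o_def)
    finally show ?thesis by simp
  qed
  also have "\<dots> = size P"
    using L by (simp add: o_def sum_list_distinct_conv_sum_set size_multiset_overloaded_eq)
  finally show ?thesis
    using L by (intro that[of L]) (simp_all add: Mtilde_comp_def Let_def)
qed

definition adapted_labelling :: "nat \<Rightarrow> 'a multiset multiset \<Rightarrow> (nat \<Rightarrow> 'a multiset) \<Rightarrow> bool" where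
  "adapted_labelling n P c \<longleftrightarrow>
     (\<forall>h. blockdiag n (Mtilde_comp n (mtype P)) h \<longleftrightarrow>
            monomial_mat n h \<and> (\<forall>i<n. c (mono_perm n h i) = c i)) \<and>
     (\<forall>h. blockdiag n (Mtilde_comp n (mtype P)) h \<longrightarrow>
            block_char (Mtilde_comp n (mtype P)) h = label_weight n c h) \<and>
     image_mset c (mset_set {..<n}) = pad_parts n P"

lemma adapted_labelling_exists:
  assumes nonempty: "{#} \<notin># P" and size: "size P \<le> n"
  shows "\<exists>c. adapted_labelling n P c"
proof -
  obtain L where L: "distinct L" "set L = set_mset P"
    and comp: "Mtilde_comp n (mtype P) =
       (if n - size P = 0 then [] else [(n - size P, 0)]) @ map (\<lambda>A. (count P A, int (size A))) L"
    using Mtilde_comp_mtype[OF nonempty] by blast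
  define CL where "CL = (if n - size P = 0 then [] else [(n - size P, {#})]) @ map (\<lambda>A. (count P A, A)) L"
  have comp_CL: "block_comp CL = Mtilde_comp n (mtype P)"
    by (simp add: comp CL_def block_comp_def)
  have sum_CL: "sum_list (map fst CL) = n"
    using L size by (simp add: CL_def o_def sum_list_distinct_conv_sum_set size_multiset_overloaded_eq)
  have distinct_CL: "distinct (map snd CL)"
    using L nonempty by (auto simp: CL_def o_def)
  have "(\<Sum>(r, A)\<leftarrow>CL. replicate_mset r A) = pad_parts n P"
    using L by (simp add: CL_def o_def sum_list_distinct_conv_sum_set sum_replicate_count pad_parts_def)
  then have "adapted_labelling n P (block_labelling CL)"
    unfolding adapted_labelling_def comp_CL[symmetric]
    using blockdiag_block_comp_iff[OF sum_CL distinct_CL] block_char_block_comp[OF sum_CL distinct_CL]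
      image_block_labelling[OF sum_CL distinct_CL]
    by simp
  then show ?thesis by blast
qed

definition labelling :: "nat \<Rightarrow> 'a multiset multiset \<Rightarrow> nat \<Rightarrow> 'a multiset" where
  "labelling n P = (SOME c. adapted_labelling n P c)"

lemma adapted_labelling_labelling:
  assumes "P \<in> multiset_partitions_le n M"
  shows "adapted_labelling n P (labelling n P)"
proof -
  have "\<exists>c. adapted_labelling n P c"
    using assms unfolding multiset_partitions_le_def multiset_partitions_def
    by (blast intro: adapted_labelling_exists)
  then show ?thesis unfolding labelling_def by (rule someI_ex)
qed

lemma
  assumes "P \<in> multiset_partitions_le n M"
  shows blockdiag_Mtilde_iff: "blockdiag n (Mtilde_comp n (mtype P)) h \<longleftrightarrow>
      monomial_mat n h \<and> (\<forall>i<n. labelling n P (mono_perm n h i) = labelling n P i)"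
    and block_char_Mtilde: "blockdiag n (Mtilde_comp n (mtype P)) h \<Longrightarrow>
      block_char (Mtilde_comp n (mtype P)) h = label_weight n (labelling n P) h"
    and image_labelling: "image_mset (labelling n P) (mset_set {..<n}) = pad_parts n P"
  using adapted_labelling_labelling[OF assms] by (simp_all add: adapted_labelling_def)

lemma count_target_mset: "count (target_mset ks) x = (if 0 < x \<and> x \<le> length ks then ks ! (x - 1) else 0)"
proof -
  have "count (target_mset ks) x = (\<Sum>i<length ks. if i = x - 1 \<and> 0 < x then ks ! i else 0)"
    by (auto simp: target_mset_def count_sum intro!: sum.cong)
  then show ?thesis by (cases "0 < x") (auto simp: sum.delta')
qed

lemma
  assumes P: "P \<in> multiset_partitions_le n (target_mset ks)"
  shows sum_count_labelling: "j < length ks \<Longrightarrow> (\<Sum>i<n. count (labelling n P i) (Suc j)) = ks ! j"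
    and set_labelling: "i < n \<Longrightarrow> set_mset (labelling n P i) \<subseteq> {1..length ks}"
proof -
  have sum: "(\<Sum>i<n. labelling n P i) = target_mset ks"
    using arg_cong[OF image_labelling[OF P], of sum_mset] P
    by (simp add: multiset_partitions_le_def multiset_partitions_def flip: sum_unfold_sum_mset)
  then show "j < length ks \<Longrightarrow> (\<Sum>i<n. count (labelling n P i) (Suc j)) = ks ! j"
    by (simp add: count_target_mset flip: count_sum)
  assume "i < n"
  then have "labelling n P i \<subseteq># target_mset ks"
    unfolding sum[symmetric] by (simp add: sum.remove[of "{..<n}" i])
  moreover have "set_mset (target_mset ks) \<subseteq> {1..length ks}"
    by (auto simp: count_target_mset split: if_splits simp flip: count_greater_zero_iff)
  ultimately show "set_mset (labelling n P i) \<subseteq> {1..length ks}"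
    using set_mset_mono by blast
qed

lemma label_weight_mmul:
  assumes h: "monomial_mat n h" and x: "monomial_mat n x"
    and stab: "\<And>i. i < n \<Longrightarrow> c (mono_perm n h i) = c i"
  shows "label_weight n c (mmul n h x) = label_weight n c h * label_weight n c x"
proof -
  have "label_weight n c (mmul n h x)
      = (\<Prod>i<n. mono_coeff n h i ^ size (c i) * mono_coeff n x (mono_perm n h i) ^ size (c (mono_perm n h i)))"
    unfolding label_weight_def using stab
    by (intro prod.cong) (auto simp: mono_coeff_mmul[OF h x] power_mult_distrib)
  also have "\<dots> = label_weight n c h * (\<Prod>i<n. mono_coeff n x (mono_perm n h i) ^ size (c (mono_perm n h i)))"
    by (simp add: prod.distrib label_weight_def)
  also have "(\<Prod>i<n. mono_coeff n x (mono_perm n h i) ^ size (c (mono_perm n h i))) = label_weight n c x"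
    using prod.permute[OF mono_perm_permutes[OF h], of "\<lambda>i. mono_coeff n x i ^ size (c i)"]
    by (simp add: label_weight_def o_def)
  finally show ?thesis .
qed

section \<open>The isomorphism\<close>

lemma coord_label_not_in_set:
  assumes "i \<notin> set js"
  shows "coord_label ks js i = {#}"
proof -
  have no_pos: "{a. a < length js \<and> js ! a = i} = {}" using assms by (auto simp: in_set_conv_nth)
  show ?thesis unfolding coord_label_def no_pos by simp
qed

context
  fixes n :: nat and ks :: "nat list"
begin

abbreviation parts :: "nat multiset multiset set" where
  "parts \<equiv> multiset_partitions_le n (target_mset ks)"

definition std_index :: "nat multiset multiset \<Rightarrow> nat list" where
  "std_index P = label_index n ks (labelling n P)"

lemma
  assumes P: "P \<in> parts"
  shows std_index_in_tidx: "std_index P \<in> tidx n (sum_list ks)"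
    and coord_label_std_index: "coord_label ks (std_index P) i = (if i < n then labelling n P i else {#})"
proof -
  show std: "std_index P \<in> tidx n (sum_list ks)"
    unfolding std_index_def using sum_count_labelling[OF P] by (rule label_index_in_tidx)
  show "coord_label ks (std_index P) i = (if i < n then labelling n P i else {#})"
  proof (cases "i < n")
    case True
    then show ?thesis unfolding std_index_def
      using coord_label_label_index[OF sum_count_labelling[OF P] set_labelling[OF P True] True] by simp
  next
    case False
    then have "i \<notin> set (std_index P)" using std by (auto simp: tidx_def)
    then show ?thesis using False by (simp add: coord_label_not_in_set)
  qed
qed

lemma coord_label_map_std_index:
  assumes P: "P \<in> parts" and s: "s permutes {..<n}"
  shows "coord_label ks (map s (std_index P)) i = (if i < n then labelling n P (inv s i) else {#})"
proof -
  have "inv s i < n \<longleftrightarrow> i < n"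
    using permutes_in_image[OF permutes_inv[OF s]] by simp
  then show ?thesis by (simp add: coord_label_map_permutes[OF s] coord_label_std_index[OF P])
qed

lemma tens_act_std_index:
  assumes P: "P \<in> parts" and x: "monomial_mat n x"
  shows "tens_act n (sum_list ks) x T (std_index P)
      = label_weight n (labelling n P) x * T (map (mono_perm n x) (std_index P))"
proof -
  have std: "length (std_index P) = sum_list ks" "set (std_index P) \<subseteq> {..<n}"
    using std_index_in_tidx[OF P] by (auto simp: tidx_def)
  have "(\<Prod>a<sum_list ks. mono_coeff n x (std_index P ! a)) = label_weight n (labelling n P) x"
    using prod_nth_eq_prod_power_coord_label[OF std(2), of "mono_coeff n x" ks] std(1)
    by (simp add: label_weight_def coord_label_std_index[OF P])
  then show ?thesis by (simp add: tens_act_monomial[OF x std_index_in_tidx[OF P]])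
qed

definition to_induced :: "(nat list \<Rightarrow> complex) \<Rightarrow> nat multiset multiset \<times> cmat \<Rightarrow> complex" where
  "to_induced T = (\<lambda>(P, x). if P \<in> parts \<and> monomial_mat n x
      then tens_act n (sum_list ks) x T (std_index P) else 0)"

definition sorting_perm :: "nat list \<Rightarrow> nat \<Rightarrow> nat" where
  "sorting_perm js = (SOME s. s permutes {..<n} \<and>
      (\<forall>i<n. coord_label ks js (s i) = labelling n (label_partition n ks js) i))"

text \<open>\<open>js\<close> carries the same labels as \<open>map (sorting_perm js) (std_index P)\<close>, where \<open>P\<close> is
  the type of \<open>js\<close>; \<open>from_induced\<close> evaluates at the corresponding permutation matrix.\<close>

definition from_induced :: "(nat multiset multiset \<times> cmat \<Rightarrow> complex) \<Rightarrow> nat list \<Rightarrow> complex" where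
  "from_induced F = (\<lambda>js. if js \<in> tidx n (sum_list ks)
      then F (label_partition n ks js, perm_mat n (sorting_perm js)) else 0)"

lemma
  assumes js: "js \<in> tidx n (sum_list ks)"
  shows sorting_perm_permutes: "sorting_perm js permutes {..<n}"
    and coord_label_sorting_perm: "i < n \<Longrightarrow> coord_label ks js (sorting_perm js i) = labelling n (label_partition n ks js) i"
proof -
  let ?P = "label_partition n ks js"
  have "image_mset (labelling n ?P) (mset_set {..<n}) = image_mset (coord_label ks js) (mset_set {..<n})"
    using image_coord_label image_labelling[OF label_partition_in_partitions[OF js]] by simp
  then obtain s where "s permutes {..<n}" "\<forall>i\<in>{..<n}. labelling n ?P i = coord_label ks js (s i)"
    by (rule image_mset_eq_implies_permutes[OF finite_lessThan])
  then have "\<exists>s. s permutes {..<n} \<and> (\<forall>i<n. coord_label ks js (s i) = labelling n ?P i)" by auto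
  then have "sorting_perm js permutes {..<n} \<and>
      (\<forall>i<n. coord_label ks js (sorting_perm js i) = labelling n ?P i)"
    unfolding sorting_perm_def by (rule someI_ex)
  then show "sorting_perm js permutes {..<n}"
    "i < n \<Longrightarrow> coord_label ks js (sorting_perm js i) = labelling n ?P i" by auto
qed

lemma coord_label_map_stabiliser:
  assumes P: "P \<in> parts" and h: "blockdiag n (Mtilde_comp n (mtype P)) h"
  shows "coord_label ks (map (mono_perm n h) (std_index P)) = coord_label ks (std_index P)"
proof
  fix i
  have hm: "monomial_mat n h" and stab: "\<And>i. i < n \<Longrightarrow> labelling n P (mono_perm n h i) = labelling n P i"
    using h blockdiag_Mtilde_iff[OF P] by auto
  have perm: "mono_perm n h permutes {..<n}" by (rule mono_perm_permutes[OF hm])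
  have "labelling n P (inv (mono_perm n h) i) = labelling n P i" if "i < n"
    using stab[of "inv (mono_perm n h) i"] permutes_inverses(1)[OF perm]
      permutes_in_image[OF permutes_inv[OF perm]] that by simp
  then show "coord_label ks (map (mono_perm n h) (std_index P)) i = coord_label ks (std_index P) i"
    by (simp add: coord_label_map_std_index[OF P perm] coord_label_std_index[OF P])
qed

lemma symtens_map_permutes_eq:
  assumes T: "T \<in> symtens_space n ks" and js: "js \<in> tidx n (sum_list ks)" and js': "js' \<in> tidx n (sum_list ks)"
    and eq: "coord_label ks js = coord_label ks js'" and s: "s permutes {..<n}"
  shows "T (map s js) = T (map s js')"
  using symtens_eq_if_coord_label_eq[OF T map_permutes_in_tidx[OF js s] map_permutes_in_tidx[OF js' s]] eq
  by (simp add: fun_eq_iff coord_label_map_permutes[OF s])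

lemma to_induced_in_dsum_space:
  assumes T: "T \<in> symtens_space n ks"
  shows "to_induced T \<in> dsum_space parts (\<lambda>P. Mtilde_space n (mtype P))"
  unfolding dsum_space_def
proof (intro CollectI allI conjI impI)
  fix P assume "P \<notin> parts" then show "(\<lambda>x. to_induced T (P, x)) = (\<lambda>x. 0)" by (simp add: to_induced_def)
next
  fix P assume P: "P \<in> parts"
  show "(\<lambda>x. to_induced T (P, x)) \<in> Mtilde_space n (mtype P)"
    unfolding Mtilde_space_def ind_space_def
  proof (intro CollectI allI conjI impI)
    fix x assume "\<not> monomial_mat n x" then show "to_induced T (P, x) = 0" by (simp add: to_induced_def)
  next
    fix h x assume "blockdiag n (Mtilde_comp n (mtype P)) h \<and> monomial_mat n x"
    then have bd: "blockdiag n (Mtilde_comp n (mtype P)) h" and x: "monomial_mat n x" by auto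
    then have h: "monomial_mat n h" and stab: "\<And>i. i < n \<Longrightarrow> labelling n P (mono_perm n h i) = labelling n P i"
      using blockdiag_Mtilde_iff[OF P] by auto
    have std: "std_index P \<in> tidx n (sum_list ks)" by (rule std_index_in_tidx[OF P])
    have "T (map (mono_perm n x) (map (mono_perm n h) (std_index P))) = T (map (mono_perm n x) (std_index P))"
      by (rule symtens_map_permutes_eq[OF T map_permutes_in_tidx[OF std mono_perm_permutes[OF h]] std
            coord_label_map_stabiliser[OF P bd] mono_perm_permutes[OF x]])
    then show "to_induced T (P, mmul n h x) = block_char (Mtilde_comp n (mtype P)) h * to_induced T (P, x)"
      using P x h monomial_mat_mmul[OF h x]
      by (simp add: to_induced_def tens_act_std_index label_weight_mmul[OF h x, of "labelling n P", OF stab] mono_perm_mmul[OF h x]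
          block_char_Mtilde[OF P bd])
  qed
qed

lemma from_induced_in_symtens_space: "from_induced F \<in> symtens_space n ks"
  unfolding symtens_space_def
proof (intro CollectI allI conjI impI ballI)
  fix js assume "js \<notin> tidx n (sum_list ks)" then show "from_induced F js = 0" by (simp add: from_induced_def)
next
  fix p js assume bp: "block_perm ks p" and js: "js \<in> tidx n (sum_list ks)"
  let ?js = "map (\<lambda>a. js ! p a) [0..<sum_list ks]"
  have "js ! p a \<in> set js" if "a < sum_list ks" for a
    using bp permutes_in_image that js by (fastforce simp: block_perm_def tidx_def)
  then have "?js \<in> tidx n (sum_list ks)" using js by (fastforce simp: tidx_def)
  moreover have "coord_label ks ?js = coord_label ks js"
    using js by (intro coord_label_block_perm[OF bp]) (simp add: tidx_def)
  ultimately show "from_induced F ?js = from_induced F js"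
    using js by (simp add: from_induced_def sorting_perm_def label_partition_def)
qed

lemma from_induced_to_induced:
  assumes T: "T \<in> symtens_space n ks"
  shows "from_induced (to_induced T) = T"
proof
  fix js
  show "from_induced (to_induced T) js = T js"
  proof (cases "js \<in> tidx n (sum_list ks)")
    case False
    then show ?thesis using T by (simp add: from_induced_def symtens_space_def)
  next
    case js: True
    define P where "P = label_partition n ks js"
    define s where "s = sorting_perm js"
    have P: "P \<in> parts" unfolding P_def by (rule label_partition_in_partitions[OF js])
    have s: "s permutes {..<n}" and sorted: "\<And>i. i < n \<Longrightarrow> coord_label ks js (s i) = labelling n P i"
      using sorting_perm_permutes[OF js] coord_label_sorting_perm[OF js] by (simp_all add: s_def P_def)
    have "coord_label ks (map s (std_index P)) i = coord_label ks js i" for i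
    proof (cases "i < n")
      case True
      then have "inv s i < n" using permutes_in_image[OF permutes_inv[OF s]] by simp
      then show ?thesis
        using True sorted[of "inv s i"] by (simp add: coord_label_map_std_index[OF P s] permutes_inverses(1)[OF s])
    next
      case False
      then have "i \<notin> set js" using js by (auto simp: tidx_def)
      then show ?thesis using False by (simp add: coord_label_map_std_index[OF P s] coord_label_not_in_set)
    qed
    then have "T (map s (std_index P)) = T js"
      by (intro symtens_eq_if_coord_label_eq[OF T map_permutes_in_tidx[OF std_index_in_tidx[OF P] s] js]) auto
    moreover have "label_weight n (labelling n P) (perm_mat n s) = 1"
      by (simp add: label_weight_def mono_coeff_perm_mat[OF s])
    ultimately show ?thesis
      using js P by (simp add: from_induced_def to_induced_def tens_act_std_index monomial_mat_perm_mat[OF s]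
          mono_perm_perm_mat[OF s] flip: P_def s_def)
  qed
qed

lemma factor_through_stabiliser:
  assumes P: "P \<in> parts" and x: "monomial_mat n x" and s: "s permutes {..<n}"
    and sorted: "\<And>i. i < n \<Longrightarrow> coord_label ks (map (mono_perm n x) (std_index P)) (s i) = labelling n P i"
  defines "h \<equiv> mono_of n (inv s \<circ> mono_perm n x) (mono_coeff n x)"
  shows "blockdiag n (Mtilde_comp n (mtype P)) h" and "label_weight n (labelling n P) h = label_weight n (labelling n P) x"
    and "mmul n h (perm_mat n s) = x"
proof -
  have px: "mono_perm n x permutes {..<n}" by (rule mono_perm_permutes[OF x])
  have ph: "inv s \<circ> mono_perm n x permutes {..<n}" by (rule permutes_compose[OF px permutes_inv[OF s]])
  have hm: "monomial_mat n h" and h_perm: "mono_perm n h = inv s \<circ> mono_perm n x"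
    and h_coeff: "\<And>i. i < n \<Longrightarrow> mono_coeff n h i = mono_coeff n x i"
    using mono_coeff_nonzero[OF x] unfolding h_def
    by (simp_all add: monomial_mat_mono_of[OF ph] mono_perm_mono_of[OF ph] mono_coeff_mono_of[OF ph])
  have "labelling n P (mono_perm n h i) = labelling n P i" if i: "i < n" for i
  proof -
    define j where "j = inv s (mono_perm n x i)"
    have xi: "mono_perm n x i < n" using permutes_in_image[OF px] i by simp
    then have "j < n" "s j = mono_perm n x i"
      using permutes_in_image[OF permutes_inv[OF s]] permutes_inverses(1)[OF s] by (simp_all add: j_def)
    then have "labelling n P j = labelling n P (inv (mono_perm n x) (mono_perm n x i))"
      using sorted[of j] xi by (simp add: coord_label_map_std_index[OF P px])
    then show ?thesis using permutes_inverses(2)[OF px] h_perm by (simp add: j_def)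
  qed
  then show "blockdiag n (Mtilde_comp n (mtype P)) h" using hm blockdiag_Mtilde_iff[OF P] by simp
  show "label_weight n (labelling n P) h = label_weight n (labelling n P) x"
    using h_coeff by (simp add: label_weight_def)
  have "mmul n h (perm_mat n s) = mono_of n (s \<circ> (inv s \<circ> mono_perm n x)) (\<lambda>i. mono_coeff n x i * 1)"
    unfolding h_def by (rule mmul_mono_of[OF ph s])
  also have "\<dots> = mono_of n (mono_perm n x) (mono_coeff n x)"
    by (rule mono_of_cong) (simp_all add: permutes_inverses(1)[OF s])
  finally show "mmul n h (perm_mat n s) = x" by (simp add: mono_of_perm_coeff[OF x])
qed

lemma to_induced_from_induced:
  assumes F: "F \<in> dsum_space parts (\<lambda>P. Mtilde_space n (mtype P))"
  shows "to_induced (from_induced F) = F"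
proof
  fix Px :: "nat multiset multiset \<times> cmat"
  obtain P x where Px: "Px = (P, x)" by fastforce
  have F_out: "P \<notin> parts \<Longrightarrow> F (P, x) = 0"
    and F_ind: "P \<in> parts \<Longrightarrow> (\<lambda>x. F (P, x)) \<in> ind_space n (Mtilde_comp n (mtype P))"
    using F by (auto simp: dsum_space_def Mtilde_space_def fun_eq_iff)
  show "to_induced (from_induced F) Px = F Px"
  proof (cases "P \<in> parts \<and> monomial_mat n x")
    case False
    then show ?thesis using F_out F_ind by (auto simp: Px to_induced_def ind_space_def)
  next
    case True
    then have P: "P \<in> parts" and x: "monomial_mat n x" by auto
    have px: "mono_perm n x permutes {..<n}" by (rule mono_perm_permutes[OF x])
    define js where "js = map (mono_perm n x) (std_index P)"
    have js: "js \<in> tidx n (sum_list ks)"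
      unfolding js_def by (rule map_permutes_in_tidx[OF std_index_in_tidx[OF P] px])
    have "image_mset (coord_label ks js) (mset_set {..<n})
        = image_mset (labelling n P) (image_mset (inv (mono_perm n x)) (mset_set {..<n}))"
      unfolding image_mset.compositionality
      by (intro image_mset_cong) (simp add: js_def coord_label_map_std_index[OF P px])
    also have "\<dots> = pad_parts n P"
      by (simp add: permutes_image_mset[OF permutes_inv[OF px]] image_labelling[OF P])
    finally have P_js: "label_partition n ks js = P"
      using P by (intro label_partition_eqI) (auto simp: multiset_partitions_le_def multiset_partitions_def)
    define s where "s = sorting_perm js"
    have s: "s permutes {..<n}" and sorted: "\<And>i. i < n \<Longrightarrow> coord_label ks js (s i) = labelling n P i"
      using sorting_perm_permutes[OF js] coord_label_sorting_perm[OF js] P_js by (simp_all add: s_def)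
    define h where "h = mono_of n (inv s \<circ> mono_perm n x) (mono_coeff n x)"
    note h = factor_through_stabiliser[OF P x s sorted[unfolded js_def], folded h_def]
    have "F (P, x) = block_char (Mtilde_comp n (mtype P)) h * F (P, perm_mat n s)"
      using F_ind[OF P] h monomial_mat_perm_mat[OF s] by (auto simp: ind_space_def)
    also have "\<dots> = to_induced (from_induced F) (P, x)"
      using P x js by (simp add: to_induced_def tens_act_std_index from_induced_def P_js block_char_Mtilde[OF P]
          h flip: js_def s_def)
    finally show ?thesis by (simp add: Px)
  qed
qed

lemma to_induced_tens_act:
  assumes g: "monomial_mat n g"
  shows "to_induced (tens_act n (sum_list ks) g T) = dsum_act (\<lambda>P. ind_act n) g (to_induced T)"
proof
  fix Px :: "nat multiset multiset \<times> cmat"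
  obtain P x where Px: "Px = (P, x)" by fastforce
  show "to_induced (tens_act n (sum_list ks) g T) Px = dsum_act (\<lambda>P. ind_act n) g (to_induced T) Px"
    using tens_act_mmul[OF _ g std_index_in_tidx] monomial_mat_mmul[OF _ g]
    by (auto simp: Px to_induced_def dsum_act_def ind_act_def)
qed

lemma to_induced_add: "to_induced (\<lambda>js. u js + v js) = (\<lambda>y. to_induced u y + to_induced v y)"
  by (auto simp: to_induced_def fun_eq_iff tens_act_add)

lemma to_induced_scale: "to_induced (\<lambda>js. c * u js) = (\<lambda>y. c * to_induced u y)"
  by (auto simp: to_induced_def fun_eq_iff tens_act_scale)

lemma rep_iso_to_induced:
  "rep_iso n (symtens_space n ks, tens_act n (sum_list ks))
     (dsum_space parts (\<lambda>P. Mtilde_space n (mtype P)), dsum_act (\<lambda>P. ind_act n))"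
  unfolding rep_iso_def fst_conv snd_conv
proof (intro exI[of _ to_induced] conjI ballI allI impI)
  show "bij_betw to_induced (symtens_space n ks) (dsum_space parts (\<lambda>P. Mtilde_space n (mtype P)))"
    by (rule bij_betw_byWitness[where f' = from_induced])
      (auto simp: from_induced_to_induced to_induced_from_induced to_induced_in_dsum_space
        from_induced_in_symtens_space)
qed (simp_all add: to_induced_add to_induced_scale to_induced_tens_act)

end

theorem corollary3p9:
  fixes n :: nat and ks :: "nat list"
  shows "rep_iso n
           (symtens_space n ks, tens_act n (sum_list ks))
           (dsum_space {P \<in> multiset_partitions (target_mset ks). size P \<le> n}
                       (\<lambda>P. Mtilde_space n (mtype P)),
            dsum_act (\<lambda>P. ind_act n))"
  using rep_iso_to_induced[of n ks] by (simp add: multiset_partitions_le_def)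

end
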